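(* Consider the following system with wavelength $\lambda>0$. A user equipment (UE) carries a uniform linear array of $K$ antennas located at $\mathbf{u}_k=\mathbf{u}+(k-1)d_u\mathbf{g}$, $k=1,\dots,K$, where $\mathbf{u}=r[\cos\theta,\sin\theta,0]^T\in\mathbb{R}^3$ is the UE location, $d_u>0$ is the inter-antenna spacing and $\mathbf{g}=[0,1,0]^T$. A reconfigurable intelligent surface (RIS) has $N=N_yN_z$ elements located at $\mathbf{s}_n=\mathbf{s}+[0,(n_y-1)d_y,(n_z-1)d_z]^T$, with $n=(n_y-1)N_y+n_z$, $n_y=1,\dots,N_y$, $n_z=1,\dots,N_z$, where $\mathbf{s}\in\mathbb{R}^3$ is the RIS location and $d_y,d_z>0$. Let $\mathbf{A}\in\mathbb{C}^{N\times K}$ be the UE–RIS channel matrix with entries $A_{n,k}=\exp\!\big(-j2\pi\|\mathbf{u}_k-\mathbf{s}_n\|/\lambda\big)$. The UE transmits a reference matrix $\mathbf{S}\in\mathbb{C}^{K\times L}$ with $\mathbf{S}\mathbf{S}^H=(P_T/K)\mathbf{I}_K$ ($P_T>0$) and receives $\mathbf{Y}=\mathbf{A}^H\boldsymbol{\Omega}\mathbf{A}\mathbf{S}+\mathbf{W}$, where $\boldsymbol{\Omega}=\operatorname{diag}(e^{j\omega_1},\dots,e^{j\omega_N})$ with $\omega_n\in[0,2\pi]$ is the RIS phase-shift matrix and $\mathbf{W}$ is noise. The received SNR is $\mathrm{SNR}=\|\mathbf{A}^H\boldsymbol{\Omega}\mathbf{A}\mathbf{S}\|_F^2/\|\mathbf{W}\|_F^2=\frac{P_T}{K}\|\mathbf{A}^H\boldsymbol{\Omega}\mathbf{A}\|_F^2/\|\mathbf{W}\|_F^2$.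 Then, regardless of the UE location $\mathbf{u}$ (i.e. for every $r,\theta$), the matrix $\boldsymbol{\Omega}_*=\mathbf{I}_N$ is an optimal solution of $\max_{\boldsymbol{\Omega}\in\mathcal{O}}\|\mathbf{A}^H\boldsymbol{\Omega}\mathbf{A}\|_F^2$, where $\mathcal{O}$ is the set of $N\times N$ diagonal matrices with unit-modulus diagonal entries; that is, $\boldsymbol{\Omega}_*=\mathbf{I}_N$ maximizes the received SNR.
   Context: $\|\cdot\|$ is the Euclidean norm, $\|\cdot\|_F$ the Frobenius norm, $(\cdot)^H$ the conjugate transpose, $j=\sqrt{-1}$, and $\mathbf{I}_N$ the $N\times N$ identity matrix. *)

theory Defs
  imports "HOL-Analysis.Analysis"
begin

definition ue_ant :: "real \<Rightarrow> real \<Rightarrow> real \<Rightarrow> nat \<Rightarrow> real^3" where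
  "ue_ant r t du k = vector [r * cos t, r * sin t, 0] + ((real k - 1) * du) *\<^sub>R vector [0, 1, 0]"

definition ris_elem :: "real^3 \<Rightarrow> real \<Rightarrow> real \<Rightarrow> nat \<times> nat \<Rightarrow> real^3" where
  "ris_elem s dy dz n = s + vector [0, (real (fst n) - 1) * dy, (real (snd n) - 1) * dz]"

definition ris_idx :: "nat \<Rightarrow> nat \<Rightarrow> (nat \<times> nat) set" where
  "ris_idx Ny Nz = {1..Ny} \<times> {1..Nz}"

definition chan :: "real \<Rightarrow> real \<Rightarrow> real \<Rightarrow> real \<Rightarrow> real^3 \<Rightarrow> real \<Rightarrow> real \<Rightarrow> nat \<times> nat \<Rightarrow> nat \<Rightarrow> complex" where
  "chan lam r t du s dy dz n k =
     exp (- \<i> * complex_of_real (2 * pi * norm (ue_ant r t du k - ris_elem s dy dz n) / lam))"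

definition AhOA :: "((nat \<times> nat) \<Rightarrow> nat \<Rightarrow> complex) \<Rightarrow> (nat \<times> nat) set \<Rightarrow> ((nat \<times> nat) \<Rightarrow> complex)
    \<Rightarrow> nat \<Rightarrow> nat \<Rightarrow> complex" where
  "AhOA A I c k k' = (\<Sum>n\<in>I. cnj (A n k) * c n * A n k')"

definition frob_sq_AhOA :: "((nat \<times> nat) \<Rightarrow> nat \<Rightarrow> complex) \<Rightarrow> (nat \<times> nat) set \<Rightarrow> nat
    \<Rightarrow> ((nat \<times> nat) \<Rightarrow> complex) \<Rightarrow> real" where
  "frob_sq_AhOA A I K c = (\<Sum>k\<in>{1..K}. \<Sum>k'\<in>{1..K}. (cmod (AhOA A I c k k'))\<^sup>2)"

text \<open>The feasible set O: diagonal matrices with unit-modulus diagonal entries,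
  represented by their diagonals (entries outside the index set are irrelevant and fixed to 0).\<close>
definition unit_diag :: "(nat \<times> nat) set \<Rightarrow> ((nat \<times> nat) \<Rightarrow> complex) set" where
  "unit_diag I = {c. (\<forall>n\<in>I. cmod (c n) = 1) \<and> (\<forall>n. n \<notin> I \<longrightarrow> c n = 0)}"

end

theory Submission imports Defs begin

text \<open>Writing a_n for the n-th row of A, expanding the squared Frobenius norm gives
  \<parallel>A^H diag(c) A\<parallel>_F^2 = \<Sum>_{n,m} c_n conj(c_m) |a_n^H a_m|^2, a combination of the nonnegative
  weights |a_n^H a_m|^2 with unimodular coefficients when |c_n| = 1. By the triangle inequality it is
  at most \<Sum>_{n,m} |a_n^H a_m|^2, which is exactly its value at c = 1. Neither the channel model nor
  the UE location plays any role.\<close>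

lemma frob_sq_diag_sandwich_eq_gram_sum:
  fixes A :: "'n \<Rightarrow> 'k \<Rightarrow> complex" and c :: "'n \<Rightarrow> complex"
  shows "complex_of_real (\<Sum>k\<in>Ks. \<Sum>k'\<in>Ks. (cmod (\<Sum>n\<in>I. cnj (A n k) * c n * A n k'))\<^sup>2)
     = (\<Sum>n\<in>I. \<Sum>m\<in>I. c n * cnj (c m) * complex_of_real ((cmod (\<Sum>k\<in>Ks. cnj (A n k) * A m k))\<^sup>2))"
proof -
  have "complex_of_real (\<Sum>k\<in>Ks. \<Sum>k'\<in>Ks. (cmod (\<Sum>n\<in>I. cnj (A n k) * c n * A n k'))\<^sup>2)
      = (\<Sum>k\<in>Ks. \<Sum>k'\<in>Ks. (\<Sum>n\<in>I. cnj (A n k) * c n * A n k') * cnj (\<Sum>m\<in>I. cnj (A m k) * c m * A m k'))"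
    by (simp only: of_real_sum complex_norm_square)
  also have "\<dots> = (\<Sum>k\<in>Ks. \<Sum>k'\<in>Ks. \<Sum>n\<in>I. \<Sum>m\<in>I.
                    c n * cnj (c m) * ((cnj (A n k) * A m k) * (A n k' * cnj (A m k'))))"
    by (simp add: sum_product cnj_sum mult_ac)
  also have "\<dots> = (\<Sum>n\<in>I. \<Sum>m\<in>I. \<Sum>k\<in>Ks. \<Sum>k'\<in>Ks.
                    c n * cnj (c m) * ((cnj (A n k) * A m k) * (A n k' * cnj (A m k'))))"
    by (subst sum.swap, subst (2) sum.swap, simp add: sum.swap[of _ Ks I])
  also have "\<dots> = (\<Sum>n\<in>I. \<Sum>m\<in>I. c n * cnj (c m)
                    * ((\<Sum>k\<in>Ks. cnj (A n k) * A m k) * cnj (\<Sum>k\<in>Ks. cnj (A n k) * A m k)))"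
    by (simp add: sum_product cnj_sum sum_distrib_left mult_ac)
  finally show ?thesis
    by (simp only: complex_norm_square)
qed

lemma frob_sq_AhOA_eq_gram_sum:
  "complex_of_real (frob_sq_AhOA A I K c)
     = (\<Sum>n\<in>I. \<Sum>m\<in>I. c n * cnj (c m) * complex_of_real ((cmod (\<Sum>k\<in>{1..K}. cnj (A n k) * A m k))\<^sup>2))"
  unfolding frob_sq_AhOA_def AhOA_def by (rule frob_sq_diag_sandwich_eq_gram_sum)

lemma frob_sq_AhOA_le_gram_sum:
  assumes "\<forall>n\<in>I. cmod (c n) = 1"
  shows "frob_sq_AhOA A I K c \<le> (\<Sum>n\<in>I. \<Sum>m\<in>I. (cmod (\<Sum>k\<in>{1..K}. cnj (A n k) * A m k))\<^sup>2)"
proof -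
  define G where "G n m = (cmod (\<Sum>k\<in>{1..K}. cnj (A n k) * A m k))\<^sup>2" for n m
  have "frob_sq_AhOA A I K c = Re (\<Sum>n\<in>I. \<Sum>m\<in>I. c n * cnj (c m) * complex_of_real (G n m))"
    using arg_cong[OF frob_sq_AhOA_eq_gram_sum, of Re] unfolding G_def by simp
  also have "\<dots> \<le> cmod (\<Sum>n\<in>I. \<Sum>m\<in>I. c n * cnj (c m) * complex_of_real (G n m))"
    by (rule complex_Re_le_cmod)
  also have "\<dots> \<le> (\<Sum>n\<in>I. \<Sum>m\<in>I. cmod (c n * cnj (c m) * complex_of_real (G n m)))"
    by (rule order_trans[OF norm_sum sum_mono[OF norm_sum]])
  also have "\<dots> = (\<Sum>n\<in>I. \<Sum>m\<in>I. G n m)"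
    by (intro sum.cong refl) (simp add: norm_mult norm_power assms G_def)
  finally show ?thesis
    unfolding G_def .
qed

lemma frob_sq_AhOA_indicator:
  "frob_sq_AhOA A I K (\<lambda>n. if n \<in> I then 1 else 0)
     = (\<Sum>n\<in>I. \<Sum>m\<in>I. (cmod (\<Sum>k\<in>{1..K}. cnj (A n k) * A m k))\<^sup>2)"
proof -
  have "complex_of_real (frob_sq_AhOA A I K (\<lambda>n. if n \<in> I then 1 else 0))
      = complex_of_real (\<Sum>n\<in>I. \<Sum>m\<in>I. (cmod (\<Sum>k\<in>{1..K}. cnj (A n k) * A m k))\<^sup>2)"
    unfolding frob_sq_AhOA_eq_gram_sum of_real_sum by (intro sum.cong refl) simp
  then show ?thesis
    by (rule of_real_eq_iff[THEN iffD1])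
qed

theorem theorem1:
  fixes lam du dy dz r t :: real and s :: "real^3" and K Ny Nz :: nat
  assumes "lam > 0" and "du > 0" and "dy > 0" and "dz > 0"
  defines "I \<equiv> ris_idx Ny Nz"
  defines "A \<equiv> chan lam r t du s dy dz"
  defines "Omega_id \<equiv> (\<lambda>n. if n \<in> I then (1::complex) else 0)"
  shows "Omega_id \<in> unit_diag I \<and>
         (\<forall>c \<in> unit_diag I. frob_sq_AhOA A I K c \<le> frob_sq_AhOA A I K Omega_id)"
proof
  show "Omega_id \<in> unit_diag I"
    unfolding unit_diag_def Omega_id_def by simp
  show "\<forall>c \<in> unit_diag I. frob_sq_AhOA A I K c \<le> frob_sq_AhOA A I K Omega_id"
    unfolding unit_diag_def Omega_id_def frob_sq_AhOA_indicator
    using frob_sq_AhOA_le_gram_sum by blast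
qed

end
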